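(* Let $\mathbf{X}\in\mathbb{R}_+^{L\times N}$, $\lambda\ge0$, $\xi>0$, $\mathbf{H}=\mathbf{1}_K\mathbf{h}^T$ with $\mathbf{h}\in[0,\tfrac12]^N$, and $$\mathcal{O}_\xi(\mathbf{M},\mathbf{A})=\tfrac12\|\mathbf{X}-\mathbf{M}\mathbf{A}\|_{2,1}+\lambda\big\|(\mathbf{A}+\xi)^{\mathbf{1}-\mathbf{H}}\big\|_1 .$$ Let $\mathbf{M}\in\mathbb{R}_+^{L\times K}$, $\mathbf{A}\in\mathbb{R}_+^{K\times N}$ be such that every row of $\mathbf{M}\mathbf{A}-\mathbf{X}$ is nonzero, and let $\mathbf{U}$ be diagonal with $U_{ll}=\tfrac12\|(\mathbf{M}\mathbf{A}-\mathbf{X})^l\|_2^{-1}$. Holding $\mathbf{U}$ fixed, compute $\bar{\mathbf{A}}$ by $$\bar A_{kn}=A_{kn}\frac{(\mathbf{M}^T\mathbf{U}\mathbf{X})_{kn}}{\big(\mathbf{M}^T\mathbf{U}\mathbf{M}\mathbf{A}+\lambda(\mathbf{1}-\mathbf{H})\circ(\mathbf{A}+\xi)^{-\mathbf{H}}\big)_{kn}}$$ and then $\bar{\mathbf{M}}$ by $$\bar M_{lk}=M_{lk}\frac{(\mathbf{U}\mathbf{X}\bar{\mathbf{A}}^T)_{lk}}{(\mathbf{U}\mathbf{M}\bar{\mathbf{A}}\bar{\mathbf{A}}^T)_{lk}}$$ (all denominators assumed positive). Then $\mathcal{O}_\xi(\bar{\mathbf{M}},\bar{\mathbf{A}})\le\mathcal{O}_\xi(\mathbf{M},\mathbf{A})$;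 i.e., the objective is non-increasing under these updating rules.
   Context: For a matrix $\mathbf{Y}$, $\mathbf{y}^l$ denotes its $l$-th row and $\|\mathbf{Y}\|_{2,1}=\sum_l\|\mathbf{y}^l\|_2$. $\|\mathbf{B}\|_1=\sum_{k,n}|B_{kn}|$. $(\mathbf{A}+\xi)^{\mathbf{1}-\mathbf{H}}=[(A_{kn}+\xi)^{1-H_{kn}}]$ and $(\mathbf{A}+\xi)^{-\mathbf{H}}=[(A_{kn}+\xi)^{-H_{kn}}]$ are entrywise powers, $\circ$ is the Hadamard product, $\mathbf{1}$ is the all-ones $K\times N$ matrix and $\mathbf{1}_K$ the all-ones vector of length $K$. $\mathbf{H}$ (the "guidance map" replicated over $K$ rows) is held fixed during the update. *)

theory Defs
  imports "HOL-Analysis.Analysis"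
begin

text \<open>Matrices are Cartesian-product types: an L x N matrix is real^'n^'l,
  whose l-th row is Y $ l (a vector in real^'n with the Euclidean norm).\<close>

definition norm21 :: "real^'n^'l \<Rightarrow> real" where
  "norm21 Y = (\<Sum>l\<in>UNIV. norm (Y $ l))"

definition norm1 :: "real^'n^'k \<Rightarrow> real" where
  "norm1 B = (\<Sum>k\<in>UNIV. \<Sum>n\<in>UNIV. \<bar>B $ k $ n\<bar>)"

text \<open>Entrywise power (A + xi)^(1 - H), with H = 1_K h^T, i.e. H_kn = h n.\<close>
definition pow_1mH :: "real^'n^'k \<Rightarrow> real \<Rightarrow> real^'n \<Rightarrow> real^'n^'k" where
  "pow_1mH A xi h = (\<chi> k n. (A $ k $ n + xi) powr (1 - h $ n))"

definition objective ::
  "real \<Rightarrow> real \<Rightarrow> real^'n \<Rightarrow> real^'n^'l \<Rightarrow> real^'k^'l \<Rightarrow> real^'n^'k \<Rightarrow> real" where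
  "objective lam xi h X M A =
     1/2 * norm21 (X - M ** A) + lam * norm1 (pow_1mH A xi h)"

definition Umat :: "real^'n^'l \<Rightarrow> real^'k^'l \<Rightarrow> real^'n^'k \<Rightarrow> real^'l^'l" where
  "Umat X M A = (\<chi> i j. if i = j then 1/2 * inverse (norm ((M ** A - X) $ i)) else 0)"

definition denomA ::
  "real \<Rightarrow> real \<Rightarrow> real^'n \<Rightarrow> real^'n^'l \<Rightarrow> real^'k^'l \<Rightarrow> real^'n^'k \<Rightarrow> real^'n^'k" where
  "denomA lam xi h X M A =
     transpose M ** Umat X M A ** M ** A
     + (\<chi> k n. lam * (1 - h $ n) * (A $ k $ n + xi) powr (- h $ n))"

definition updA ::
  "real \<Rightarrow> real \<Rightarrow> real^'n \<Rightarrow> real^'n^'l \<Rightarrow> real^'k^'l \<Rightarrow> real^'n^'k \<Rightarrow> real^'n^'k" where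
  "updA lam xi h X M A =
     (\<chi> k n. A $ k $ n * (transpose M ** Umat X M A ** X) $ k $ n
                / denomA lam xi h X M A $ k $ n)"

text \<open>M-update uses the same (fixed) U, computed from the old M and A.\<close>
definition updM ::
  "real^'l^'l \<Rightarrow> real^'n^'l \<Rightarrow> real^'k^'l \<Rightarrow> real^'n^'k \<Rightarrow> real^'k^'l" where
  "updM U X M Ab =
     (\<chi> l k. M $ l $ k * (U ** X ** transpose Ab) $ l $ k
                / (U ** M ** Ab ** transpose Ab) $ l $ k)"

end

theory Submission
  imports Defs
begin

text \<open>
  The proof is a majorization-minimization argument in three layers.
  (1) The l2,1 data term is majorized by a weighted least-squares error: for s > 0 one has
      r <= r^2/(2s) + s/2 with equality at r = s; taking s_l = ||(MA - X)^l|| (the current row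
      residuals) gives weights U_ll = 1/(2 s_l), with equality at the current iterate (M, A).
  (2) For a general weighted least-squares error  sum_ij w_ij (Y_ij - (G V)_ij)^2  plus a linear
      term  2 sum c_kj V_kj  with c >= 0, the Lee-Seung type multiplicative update
      V_kj <- V_kj * gradneg_kj / (gradpos_kj + c_kj) does not increase the sum.  This follows
      from a Cauchy-Schwarz based auxiliary function and a one-variable quadratic estimate.
      Since the weights are entrywise, the same lemma covers the A-update (with c from the
      penalty) and, after transposing the problem, the M-update (with c = 0).
  (3) The penalty (A + xi)^(1-h) is concave in A, so it lies below its tangent at A; the slope
      of that tangent is exactly the linear coefficient c used in the A-update.
\<close>

lemma weighted_Cauchy_Schwarz:
  fixes w t :: "'a \<Rightarrow> real"
  assumes "\<And>k. k \<in> S \<Longrightarrow> w k \<ge> 0"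
  shows "(\<Sum>k\<in>S. w k * t k)\<^sup>2 \<le> (\<Sum>k\<in>S. w k) * (\<Sum>k\<in>S. w k * (t k)\<^sup>2)"
proof -
  have "(\<Sum>k\<in>S. w k * t k) = (\<Sum>k\<in>S. sqrt (w k) * (sqrt (w k) * t k))"
    using assms by (intro sum.cong) (auto simp flip: mult.assoc)
  moreover have "(\<Sum>k\<in>S. w k) = (\<Sum>k\<in>S. (sqrt (w k))\<^sup>2)"
    using assms by (intro sum.cong) auto
  moreover have "(\<Sum>k\<in>S. w k * (t k)\<^sup>2) = (\<Sum>k\<in>S. (sqrt (w k) * t k)\<^sup>2)"
    using assms by (intro sum.cong) (auto simp: power_mult_distrib)
  ultimately show ?thesis
    using Cauchy_Schwarz_ineq_sum[of "\<lambda>k. sqrt (w k)" "\<lambda>k. sqrt (w k) * t k" S] by simp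
qed

lemma square_majorant:
  fixes y :: real and w t :: "'k \<Rightarrow> real"
  assumes "\<And>k. k \<in> S \<Longrightarrow> w k \<ge> 0"
  shows "(y - (\<Sum>k\<in>S. w k * t k))\<^sup>2 \<le> (y - sum w S)\<^sup>2
           + (\<Sum>k\<in>S. w k * (sum w S * ((t k)\<^sup>2 - 1) - 2 * y * (t k - 1)))"
proof -
  have "(\<Sum>k\<in>S. w k * (sum w S * ((t k)\<^sup>2 - 1) - 2 * y * (t k - 1)))
      = sum w S * (\<Sum>k\<in>S. w k * (t k)\<^sup>2) - (sum w S)\<^sup>2
        - 2 * y * (\<Sum>k\<in>S. w k * t k) + 2 * y * sum w S"
    by (simp add: algebra_simps power2_eq_square sum_distrib_left sum_subtractf sum.distrib
        flip: sum_distrib_right) (simp flip: sum_distrib_left sum_distrib_right)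
  with weighted_Cauchy_Schwarz[of S w t] assms show ?thesis
    by (simp add: power2_eq_square algebra_simps)
qed

(* The one-variable core of the descent: with t = b/(p+c) the bracket equals
   -(p + 2c)(t - 1)^2 <= 0, so each coordinate of the auxiliary bound is nonpositive. *)
lemma multiplicative_step_scalar:
  fixes a b p c :: real
  assumes "a \<ge> 0" "c \<ge> 0" "p + c > 0"
  defines "t \<equiv> b / (p + c)"
  shows "a * (p * (t\<^sup>2 - 1) - 2 * b * (t - 1)) + 2 * c * a * (t - 1) \<le> 0"
proof -
  have b: "b = t * (p + c)" using assms(3) by (simp add: t_def)
  have "p * (t\<^sup>2 - 1) - 2 * b * (t - 1) + 2 * c * (t - 1) = - ((p + 2 * c) * (t - 1)\<^sup>2)"
    unfolding b by (simp add: algebra_simps power2_eq_square)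
  also have "\<dots> \<le> 0" using assms(2,3) by simp
  finally have "a * (p * (t\<^sup>2 - 1) - 2 * b * (t - 1) + 2 * c * (t - 1)) \<le> 0"
    using assms(1) by (simp add: mult_nonneg_nonpos)
  thus ?thesis by (simp add: algebra_simps)
qed

definition wls :: "('i::finite \<Rightarrow> 'j::finite \<Rightarrow> real) \<Rightarrow> ('i \<Rightarrow> 'j \<Rightarrow> real)
    \<Rightarrow> ('i \<Rightarrow> 'k::finite \<Rightarrow> real) \<Rightarrow> ('k \<Rightarrow> 'j \<Rightarrow> real) \<Rightarrow> real" where
  "wls \<omega> Y G V = (\<Sum>i\<in>UNIV. \<Sum>j\<in>UNIV. \<omega> i j * (Y i j - (\<Sum>k\<in>UNIV. G i k * V k j))\<^sup>2)"

(* Negative and positive parts of the gradient of wls/2 in V:  (G^T (w o Y))_kj  and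
   (G^T (w o (G V)))_kj. *)
definition grad_neg :: "('i::finite \<Rightarrow> 'j \<Rightarrow> real) \<Rightarrow> ('i \<Rightarrow> 'j \<Rightarrow> real)
    \<Rightarrow> ('i \<Rightarrow> 'k \<Rightarrow> real) \<Rightarrow> 'k \<Rightarrow> 'j \<Rightarrow> real" where
  "grad_neg \<omega> Y G k j = (\<Sum>i\<in>UNIV. G i k * \<omega> i j * Y i j)"

definition grad_pos :: "('i::finite \<Rightarrow> 'j \<Rightarrow> real) \<Rightarrow> ('i \<Rightarrow> 'k::finite \<Rightarrow> real)
    \<Rightarrow> ('k \<Rightarrow> 'j \<Rightarrow> real) \<Rightarrow> 'k \<Rightarrow> 'j \<Rightarrow> real" where
  "grad_pos \<omega> G V k j = (\<Sum>i\<in>UNIV. G i k * \<omega> i j * (\<Sum>k'\<in>UNIV. G i k' * V k' j))"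

definition mult_update :: "('i::finite \<Rightarrow> 'j \<Rightarrow> real) \<Rightarrow> ('i \<Rightarrow> 'j \<Rightarrow> real)
    \<Rightarrow> ('i \<Rightarrow> 'k::finite \<Rightarrow> real) \<Rightarrow> ('k \<Rightarrow> 'j \<Rightarrow> real) \<Rightarrow> ('k \<Rightarrow> 'j \<Rightarrow> real)
    \<Rightarrow> 'k \<Rightarrow> 'j \<Rightarrow> real" where
  "mult_update \<omega> Y G c V k j = V k j * grad_neg \<omega> Y G k j / (grad_pos \<omega> G V k j + c k j)"

lemma wls_transpose:
  "wls \<omega> Y G V = wls (\<lambda>j i. \<omega> i j) (\<lambda>j i. Y i j) (\<lambda>j k. V k j) (\<lambda>k i. G i k)"
  unfolding wls_def by (subst sum.swap) (simp add: mult.commute)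

lemma mult_update_nonneg:
  assumes "\<And>i j. \<omega> i j \<ge> 0" "\<And>i j. Y i j \<ge> 0" "\<And>i k. G i k \<ge> 0" "\<And>k j. V k j \<ge> 0"
    and "\<And>k j. grad_pos \<omega> G V k j + c k j > 0"
  shows "mult_update \<omega> Y G c V k j \<ge> 0"
  unfolding mult_update_def grad_neg_def
  using assms by (intro divide_nonneg_pos mult_nonneg_nonneg sum_nonneg) auto

lemma wls_multiplicative_majorant:
  fixes \<omega> Y :: "'i::finite \<Rightarrow> 'j::finite \<Rightarrow> real" and G :: "'i \<Rightarrow> 'k::finite \<Rightarrow> real"
    and V t :: "'k \<Rightarrow> 'j \<Rightarrow> real"
  assumes \<omega>: "\<And>i j. \<omega> i j \<ge> 0" and G: "\<And>i k. G i k \<ge> 0" and V: "\<And>k j. V k j \<ge> 0"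
  shows "wls \<omega> Y G (\<lambda>k j. V k j * t k j)
           \<le> wls \<omega> Y G V + (\<Sum>k\<in>UNIV. \<Sum>j\<in>UNIV. V k j * (grad_pos \<omega> G V k j * ((t k j)\<^sup>2 - 1)
                                                     - 2 * grad_neg \<omega> Y G k j * (t k j - 1)))"
proof -
  define S where "S i j = (\<Sum>k\<in>UNIV. G i k * V k j)" for i j
  define e where "e i j k = \<omega> i j * (G i k * V k j) * (S i j * ((t k j)\<^sup>2 - 1) - 2 * Y i j * (t k j - 1))"
    for i j k
  have entry: "\<omega> i j * (Y i j - (\<Sum>k\<in>UNIV. G i k * (V k j * t k j)))\<^sup>2
      \<le> \<omega> i j * (Y i j - S i j)\<^sup>2 + (\<Sum>k\<in>UNIV. e i j k)" for i j
  proof -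
    have "(Y i j - (\<Sum>k\<in>UNIV. (G i k * V k j) * t k j))\<^sup>2
        \<le> (Y i j - S i j)\<^sup>2
          + (\<Sum>k\<in>UNIV. G i k * V k j * (S i j * ((t k j)\<^sup>2 - 1) - 2 * Y i j * (t k j - 1)))"
      using square_majorant[of UNIV "\<lambda>k. G i k * V k j" "Y i j" "\<lambda>k. t k j"] G V
      by (simp add: S_def)
    from mult_left_mono[OF this \<omega>] show ?thesis
      by (simp add: e_def algebra_simps sum_distrib_left)
  qed
  have regroup: "(\<Sum>i\<in>UNIV. e i j k) = V k j * (grad_pos \<omega> G V k j * ((t k j)\<^sup>2 - 1)
                                                - 2 * grad_neg \<omega> Y G k j * (t k j - 1))" for k j
  proof -
    have "(\<Sum>i\<in>UNIV. e i j k)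
        = (\<Sum>i\<in>UNIV. V k j * ((t k j)\<^sup>2 - 1) * (G i k * \<omega> i j * S i j)
                         - 2 * V k j * (t k j - 1) * (G i k * \<omega> i j * Y i j))"
      unfolding e_def by (intro sum.cong) (simp_all add: algebra_simps)
    also have "\<dots> = V k j * ((t k j)\<^sup>2 - 1) * grad_pos \<omega> G V k j
                     - 2 * V k j * (t k j - 1) * grad_neg \<omega> Y G k j"
      by (simp only: sum_subtractf grad_pos_def grad_neg_def S_def sum_distrib_left)
    finally show ?thesis by (simp add: algebra_simps)
  qed
  have "wls \<omega> Y G (\<lambda>k j. V k j * t k j)
      \<le> (\<Sum>i\<in>UNIV. \<Sum>j\<in>UNIV. \<omega> i j * (Y i j - S i j)\<^sup>2 + (\<Sum>k\<in>UNIV. e i j k))"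
    unfolding wls_def by (intro sum_mono entry)
  also have "\<dots> = wls \<omega> Y G V + (\<Sum>i\<in>UNIV. \<Sum>j\<in>UNIV. \<Sum>k\<in>UNIV. e i j k)"
    unfolding wls_def S_def by (simp only: sum.distrib)
  also have "(\<Sum>i\<in>UNIV. \<Sum>j\<in>UNIV. \<Sum>k\<in>UNIV. e i j k) = (\<Sum>k\<in>UNIV. \<Sum>j\<in>UNIV. \<Sum>i\<in>UNIV. e i j k)"
    by (subst sum.swap, subst (1 2) sum.swap) (rule refl)
  finally show ?thesis by (simp only: regroup)
qed

lemma wls_mult_update_descent:
  fixes \<omega> Y :: "'i::finite \<Rightarrow> 'j::finite \<Rightarrow> real" and G :: "'i \<Rightarrow> 'k::finite \<Rightarrow> real"
    and V c :: "'k \<Rightarrow> 'j \<Rightarrow> real"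
  assumes \<omega>: "\<And>i j. \<omega> i j \<ge> 0" and G: "\<And>i k. G i k \<ge> 0" and V: "\<And>k j. V k j \<ge> 0"
    and c: "\<And>k j. c k j \<ge> 0" and den: "\<And>k j. grad_pos \<omega> G V k j + c k j > 0"
  defines "V' \<equiv> mult_update \<omega> Y G c V"
  shows "wls \<omega> Y G V' + 2 * (\<Sum>k\<in>UNIV. \<Sum>j\<in>UNIV. c k j * V' k j)
           \<le> wls \<omega> Y G V + 2 * (\<Sum>k\<in>UNIV. \<Sum>j\<in>UNIV. c k j * V k j)"
proof -
  define t where "t k j = grad_neg \<omega> Y G k j / (grad_pos \<omega> G V k j + c k j)" for k j
  have V': "V' = (\<lambda>k j. V k j * t k j)"
    by (simp add: V'_def mult_update_def t_def fun_eq_iff)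
  define gap where "gap k j = V k j * (grad_pos \<omega> G V k j * ((t k j)\<^sup>2 - 1)
                                       - 2 * grad_neg \<omega> Y G k j * (t k j - 1))" for k j
  have majorant: "wls \<omega> Y G V' \<le> wls \<omega> Y G V + (\<Sum>k\<in>UNIV. \<Sum>j\<in>UNIV. gap k j)"
    unfolding V' gap_def by (rule wls_multiplicative_majorant[OF \<omega> G V])
  have linear: "2 * (\<Sum>k\<in>UNIV. \<Sum>j\<in>UNIV. c k j * V' k j) - 2 * (\<Sum>k\<in>UNIV. \<Sum>j\<in>UNIV. c k j * V k j)
      = (\<Sum>k\<in>UNIV. \<Sum>j\<in>UNIV. 2 * c k j * V k j * (t k j - 1))"
    by (simp add: V' sum_distrib_left algebra_simps flip: sum_subtractf)
  have "gap k j + 2 * c k j * V k j * (t k j - 1) \<le> 0" for k j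
    using multiplicative_step_scalar[OF V[of k j] c[of k j] den[of k j], where b = "grad_neg \<omega> Y G k j"]
    by (simp add: gap_def t_def)
  hence "(\<Sum>k\<in>UNIV. \<Sum>j\<in>UNIV. gap k j + 2 * c k j * V k j * (t k j - 1)) \<le> 0"
    by (intro sum_nonpos)
  hence "(\<Sum>k\<in>UNIV. \<Sum>j\<in>UNIV. gap k j) + (\<Sum>k\<in>UNIV. \<Sum>j\<in>UNIV. 2 * c k j * V k j * (t k j - 1)) \<le> 0"
    by (simp only: sum.distrib)
  with majorant linear show ?thesis by linarith
qed

lemma powr_tangent_bound:
  fixes x y p :: real
  assumes "x > 0" "y > 0" "0 \<le> p" "p \<le> 1"
  shows "y powr p \<le> x powr p + p * x powr (p - 1) * (y - x)"
proof -
  have "y powr p * x powr (1 - p) \<le> p * y + (1 - p) * x"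
    using Youngs_inequality_0[of p "1 - p" y x] assms by simp
  hence "y powr p * x powr (1 - p) * x powr (p - 1) \<le> (p * y + (1 - p) * x) * x powr (p - 1)"
    by (rule mult_right_mono) simp
  moreover have "x powr (1 - p) * x powr (p - 1) = 1"
    using assms(1) by (simp flip: powr_add)
  moreover have "x * x powr (p - 1) = x powr p"
    using assms(1) by (simp add: powr_mult_base)
  ultimately show ?thesis by (simp add: algebra_simps)
qed

lemma half_norm_majorant:
  fixes r s :: real
  assumes "s > 0"
  shows "r \<le> r\<^sup>2 / (2 * s) + s / 2"
proof -
  have "r\<^sup>2 / (2 * s) + s / 2 - r = (r - s)\<^sup>2 / (2 * s)"
    using assms by (simp add: field_simps power2_eq_square)
  also have "\<dots> \<ge> 0" using assms by simp
  finally show ?thesis by simp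
qed

abbreviation (input) entries :: "'a^'j^'i \<Rightarrow> 'i \<Rightarrow> 'j \<Rightarrow> 'a" where
  "entries Z \<equiv> \<lambda>i j. Z $ i $ j"

lemma matrix_mult_entry: "(P ** Q) $ i $ j = (\<Sum>k\<in>UNIV. P $ i $ k * Q $ k $ j)"
  by (simp add: matrix_matrix_mult_def)

lemma wls_row_norms:
  fixes X :: "real^'n^'l" and P :: "real^'k^'l" and Q :: "real^'n^'k"
  shows "wls (\<lambda>l n. w l) (entries X) (entries P) (entries Q)
           = (\<Sum>l\<in>UNIV. w l * (norm ((X - P ** Q) $ l))\<^sup>2)"
  unfolding wls_def power2_norm_eq_inner
  by (simp add: inner_vec_def matrix_mult_entry power2_eq_square sum_distrib_left)

lemma norm21_residual_majorant:
  fixes X :: "real^'n^'l" and P :: "real^'k^'l" and Q :: "real^'n^'k"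
  assumes "\<And>l. s l > 0"
  shows "norm21 (X - P ** Q)
           \<le> wls (\<lambda>l n. 1 / (2 * s l)) (entries X) (entries P) (entries Q) + (\<Sum>l\<in>UNIV. s l) / 2"
proof -
  have "norm21 (X - P ** Q) \<le> (\<Sum>l\<in>UNIV. (norm ((X - P ** Q) $ l))\<^sup>2 / (2 * s l) + s l / 2)"
    unfolding norm21_def by (intro sum_mono half_norm_majorant assms)
  thus ?thesis by (simp add: wls_row_norms sum.distrib sum_divide_distrib)
qed

lemma norm21_residual_majorant_eq:
  fixes X :: "real^'n^'l" and P :: "real^'k^'l" and Q :: "real^'n^'k"
  assumes "\<And>l. norm ((X - P ** Q) $ l) = s l" and "\<And>l. s l > 0"
  shows "norm21 (X - P ** Q)
           = wls (\<lambda>l n. 1 / (2 * s l)) (entries X) (entries P) (entries Q) + (\<Sum>l\<in>UNIV. s l) / 2"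
proof -
  have "norm21 (X - P ** Q) = (\<Sum>l\<in>UNIV. (norm ((X - P ** Q) $ l))\<^sup>2 / (2 * s l) + s l / 2)"
    unfolding norm21_def using assms by (intro sum.cong) (simp_all add: power2_eq_square)
  thus ?thesis by (simp add: wls_row_norms sum.distrib sum_divide_distrib)
qed

lemma penalty_tangent_bound:
  fixes A A' :: "real^'n^'k" and h :: "real^'n"
  assumes "\<And>k n. A $ k $ n + xi > 0" "\<And>k n. A' $ k $ n + xi > 0"
    and "\<And>n. 0 \<le> h $ n \<and> h $ n \<le> 1" and "lam \<ge> 0"
  shows "lam * norm1 (pow_1mH A' xi h) \<le> lam * norm1 (pow_1mH A xi h)
           + (\<Sum>k\<in>UNIV. \<Sum>n\<in>UNIV. lam * (1 - h $ n) * (A $ k $ n + xi) powr (- h $ n)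
                                     * (A' $ k $ n - A $ k $ n))"
proof -
  have "lam * (A' $ k $ n + xi) powr (1 - h $ n)
      \<le> lam * (A $ k $ n + xi) powr (1 - h $ n)
        + lam * (1 - h $ n) * (A $ k $ n + xi) powr (- h $ n) * (A' $ k $ n - A $ k $ n)" for k n
    using mult_left_mono[OF powr_tangent_bound[OF assms(1,2), of "1 - h $ n" k n k n] assms(4)]
      assms(3)[of n] by (simp add: algebra_simps)
  hence "(\<Sum>k\<in>UNIV. \<Sum>n\<in>UNIV. lam * (A' $ k $ n + xi) powr (1 - h $ n))
      \<le> (\<Sum>k\<in>UNIV. \<Sum>n\<in>UNIV. lam * (A $ k $ n + xi) powr (1 - h $ n)
        + lam * (1 - h $ n) * (A $ k $ n + xi) powr (- h $ n) * (A' $ k $ n - A $ k $ n))"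
    by (intro sum_mono)
  thus ?thesis by (simp add: norm1_def pow_1mH_def sum_distrib_left sum.distrib)
qed

lemma diagonal_mult_entry:
  fixes D :: "'a::comm_ring_1^'l^'l"
  assumes "\<And>i j. i \<noteq> j \<Longrightarrow> D $ i $ j = 0"
  shows "(D ** Y) $ i $ j = D $ i $ i * Y $ i $ j"
proof -
  have "(D ** Y) $ i $ j = (\<Sum>k\<in>UNIV. if k = i then D $ i $ i * Y $ i $ j else 0)"
    unfolding matrix_mult_entry using assms by (intro sum.cong) auto
  thus ?thesis by simp
qed

lemma Umat_entry:
  "Umat X M A $ i $ j = (if i = j then 1 / (2 * norm ((M ** A - X) $ i)) else 0)"
  by (simp add: Umat_def inverse_eq_divide)

lemma Umat_mult_entry:
  "(Umat X M A ** Y) $ i $ j = 1 / (2 * norm ((M ** A - X) $ i)) * Y $ i $ j"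
  by (subst diagonal_mult_entry) (simp_all add: Umat_entry)

lemma denomA_entry:
  "denomA lam xi h X M A $ k $ n
     = grad_pos (\<lambda>l n. 1 / (2 * norm ((M ** A - X) $ l))) (entries M) (entries A) k n
       + lam * (1 - h $ n) * (A $ k $ n + xi) powr (- h $ n)"
  unfolding denomA_def
  by (simp add: matrix_mul_assoc[symmetric] matrix_mult_entry[of "transpose M"] Umat_mult_entry)
     (simp add: grad_pos_def matrix_mult_entry transpose_def ac_simps)

lemma updA_entry:
  "updA lam xi h X M A $ k $ n
     = mult_update (\<lambda>l n. 1 / (2 * norm ((M ** A - X) $ l))) (entries X) (entries M)
         (\<lambda>k n. lam * (1 - h $ n) * (A $ k $ n + xi) powr (- h $ n)) (entries A) k n"
  unfolding updA_def mult_update_def denomA_entry[symmetric]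
  by (simp add: matrix_mul_assoc[symmetric] matrix_mult_entry[of "transpose M"] Umat_mult_entry)
     (simp add: grad_neg_def transpose_def ac_simps)

lemma updM_denominator_entry:
  assumes "\<And>i j. i \<noteq> j \<Longrightarrow> U $ i $ j = 0"
  shows "(U ** M ** Ab ** transpose Ab) $ l $ k
           = grad_pos (\<lambda>n l. U $ l $ l) (\<lambda>n k. Ab $ k $ n) (\<lambda>k l. M $ l $ k) k l"
  by (simp add: matrix_mult_entry[of "U ** M ** Ab"] matrix_mult_entry[of "U ** M"]
      diagonal_mult_entry[OF assms] grad_pos_def transpose_def sum_distrib_left sum_distrib_right
      ac_simps)

lemma updM_entry:
  assumes "\<And>i j. i \<noteq> j \<Longrightarrow> U $ i $ j = 0"
  shows "updM U X M Ab $ l $ k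
           = mult_update (\<lambda>n l. U $ l $ l) (\<lambda>n l. X $ l $ n) (\<lambda>n k. Ab $ k $ n) (\<lambda>_ _. 0)
               (\<lambda>k l. M $ l $ k) k l"
proof -
  have "(U ** X ** transpose Ab) $ l $ k
      = grad_neg (\<lambda>n l. U $ l $ l) (\<lambda>n l. X $ l $ n) (\<lambda>n k. Ab $ k $ n) k l"
    by (simp add: matrix_mult_entry[of "U ** X"] diagonal_mult_entry[OF assms] grad_neg_def
        transpose_def ac_simps)
  thus ?thesis
    by (simp add: updM_def mult_update_def updM_denominator_entry[OF assms])
qed

lemma A_step_descent:
  fixes X :: "real^'n^'l" and M :: "real^'k^'l" and A :: "real^'n^'k"
  assumes M: "\<And>l k. M $ l $ k \<ge> 0" and A: "\<And>k n. A $ k $ n \<ge> 0"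
    and lam: "lam \<ge> 0" and h: "\<And>n. h $ n \<le> 1"
    and den: "\<And>k n. denomA lam xi h X M A $ k $ n > 0"
  defines "\<omega> \<equiv> \<lambda>l n. 1 / (2 * norm ((M ** A - X) $ l))"
    and "c \<equiv> \<lambda>k n. lam * (1 - h $ n) * (A $ k $ n + xi) powr (- h $ n)"
    and "Ab \<equiv> updA lam xi h X M A"
  shows "wls \<omega> (entries X) (entries M) (entries Ab) + 2 * (\<Sum>k\<in>UNIV. \<Sum>n\<in>UNIV. c k n * Ab $ k $ n)
       \<le> wls \<omega> (entries X) (entries M) (entries A) + 2 * (\<Sum>k\<in>UNIV. \<Sum>n\<in>UNIV. c k n * A $ k $ n)"
proof -
  have upd: "mult_update \<omega> (entries X) (entries M) c (entries A) = entries Ab"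
    by (simp add: Ab_def \<omega>_def c_def updA_entry)
  have "\<omega> l n \<ge> 0" "c k n \<ge> 0" for l n k
    using lam h[of n] by (simp_all add: \<omega>_def c_def)
  moreover have "grad_pos \<omega> (entries M) (entries A) k n + c k n > 0" for k n
    using den[of k n] by (simp add: denomA_entry \<omega>_def c_def)
  ultimately show ?thesis
    using wls_mult_update_descent[of \<omega> "entries M" "entries A" c "entries X"] M A
    by (simp add: upd)
qed

lemma M_step_descent:
  fixes X :: "real^'n^'l" and M :: "real^'k^'l" and Ab :: "real^'n^'k" and U :: "real^'l^'l"
  assumes diag: "\<And>i j. i \<noteq> j \<Longrightarrow> U $ i $ j = 0" and U: "\<And>l. U $ l $ l \<ge> 0"
    and M: "\<And>l k. M $ l $ k \<ge> 0" and Ab: "\<And>k n. Ab $ k $ n \<ge> 0"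
    and den: "\<And>l k. (U ** M ** Ab ** transpose Ab) $ l $ k > 0"
  shows "wls (\<lambda>l n. U $ l $ l) (entries X) (entries (updM U X M Ab)) (entries Ab)
       \<le> wls (\<lambda>l n. U $ l $ l) (entries X) (entries M) (entries Ab)"
proof -
  let ?\<omega> = "\<lambda>n l. U $ l $ l" and ?Y = "\<lambda>n l. X $ l $ n" and ?G = "\<lambda>n k. Ab $ k $ n"
  have upd: "mult_update ?\<omega> ?Y ?G (\<lambda>_ _. 0) (\<lambda>k l. M $ l $ k) = (\<lambda>k l. updM U X M Ab $ l $ k)"
    by (simp add: updM_entry[OF diag])
  have "wls ?\<omega> ?Y ?G (\<lambda>k l. updM U X M Ab $ l $ k) \<le> wls ?\<omega> ?Y ?G (\<lambda>k l. M $ l $ k)"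
    using wls_mult_update_descent[of ?\<omega> ?G "\<lambda>k l. M $ l $ k" "\<lambda>_ _. 0" ?Y] U M Ab den
    by (simp add: upd updM_denominator_entry[OF diag])
  thus ?thesis by (simp add: wls_transpose[of "\<lambda>l n. U $ l $ l"])
qed

(* The A-update keeps A nonnegative, so the penalty stays defined by its concave branch. *)
lemma updA_nonneg:
  fixes X :: "real^'n^'l" and M :: "real^'k^'l" and A :: "real^'n^'k"
  assumes "\<And>l n. X $ l $ n \<ge> 0" "\<And>l k. M $ l $ k \<ge> 0" "\<And>k n. A $ k $ n \<ge> 0"
    and "\<And>k n. denomA lam xi h X M A $ k $ n > 0"
  shows "updA lam xi h X M A $ k $ n \<ge> 0"
  unfolding updA_entry using assms
  by (intro mult_update_nonneg) (auto simp: denomA_entry)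

(* Chain: fit(new) <= wls(Mb, Ab) + c0 <= wls(M, Ab) + c0 (M-step), the A-step trades
   wls(M, Ab) - wls(M, A) against the linear term, the tangent bound controls the penalty by
   the same linear term, and fit(old) = wls(M, A) + c0 closes the chain. *)
theorem theorem2:
  fixes X :: "real^'n^'l" and M :: "real^'k^'l" and A :: "real^'n^'k"
    and h :: "real^'n" and lam xi :: real
  assumes X_nonneg: "\<forall>l n. X $ l $ n \<ge> 0"
    and M_nonneg: "\<forall>l k. M $ l $ k \<ge> 0"
    and A_nonneg: "\<forall>k n. A $ k $ n \<ge> 0"
    and lam: "lam \<ge> 0" and xi: "xi > 0"
    and h: "\<forall>n. 0 \<le> h $ n \<and> h $ n \<le> 1/2"
    and rows: "\<forall>l. (M ** A - X) $ l \<noteq> 0"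
    and denA_pos: "\<forall>k n. denomA lam xi h X M A $ k $ n > 0"
    and denM_pos: "\<forall>l k. (Umat X M A ** M ** updA lam xi h X M A
                            ** transpose (updA lam xi h X M A)) $ l $ k > 0"
  shows "objective lam xi h X
           (updM (Umat X M A) X M (updA lam xi h X M A)) (updA lam xi h X M A)
         \<le> objective lam xi h X M A"
proof -
  define s where "s l = norm ((M ** A - X) $ l)" for l
  define \<omega> :: "'l \<Rightarrow> 'n \<Rightarrow> real" where "\<omega> = (\<lambda>l n. 1 / (2 * s l))"
  define c where "c k n = lam * (1 - h $ n) * (A $ k $ n + xi) powr (- h $ n)" for k n
  define Ab where "Ab = updA lam xi h X M A"
  define Mb where "Mb = updM (Umat X M A) X M Ab"
  have s_pos: "s l > 0" for l using rows by (simp add: s_def)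
  have h01: "0 \<le> h $ n \<and> h $ n \<le> 1" for n using h[rule_format, of n] by linarith
  have Ab_nonneg: "Ab $ k $ n \<ge> 0" for k n
    unfolding Ab_def by (rule updA_nonneg) (use X_nonneg M_nonneg A_nonneg denA_pos in auto)
  have fit_new: "norm21 (X - Mb ** Ab) \<le> wls \<omega> (entries X) (entries Mb) (entries Ab) + sum s UNIV / 2"
    using norm21_residual_majorant[of s, OF s_pos] by (simp add: \<omega>_def)
  have fit_old: "norm21 (X - M ** A) = wls \<omega> (entries X) (entries M) (entries A) + sum s UNIV / 2"
    using norm21_residual_majorant_eq[of X M A s, OF _ s_pos] by (simp add: \<omega>_def s_def norm_minus_commute)
  have M_step: "wls \<omega> (entries X) (entries Mb) (entries Ab) \<le> wls \<omega> (entries X) (entries M) (entries Ab)"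
    using M_step_descent[of "Umat X M A" M Ab X] M_nonneg Ab_nonneg denM_pos
    by (simp add: Umat_entry Mb_def Ab_def \<omega>_def s_def)
  have A_step: "wls \<omega> (entries X) (entries M) (entries Ab) + 2 * (\<Sum>k\<in>UNIV. \<Sum>n\<in>UNIV. c k n * Ab $ k $ n)
      \<le> wls \<omega> (entries X) (entries M) (entries A) + 2 * (\<Sum>k\<in>UNIV. \<Sum>n\<in>UNIV. c k n * A $ k $ n)"
    using A_step_descent[of M A lam h xi X] M_nonneg A_nonneg lam h01 denA_pos
    by (simp add: \<omega>_def s_def c_def Ab_def)
  have penalty: "lam * norm1 (pow_1mH Ab xi h) \<le> lam * norm1 (pow_1mH A xi h)
      + (\<Sum>k\<in>UNIV. \<Sum>n\<in>UNIV. c k n * Ab $ k $ n) - (\<Sum>k\<in>UNIV. \<Sum>n\<in>UNIV. c k n * A $ k $ n)"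
    using penalty_tangent_bound[of A xi Ab h lam] A_nonneg Ab_nonneg xi h01 lam
    by (simp add: c_def add_nonneg_pos right_diff_distrib sum_subtractf)
  show ?thesis
    unfolding objective_def Ab_def[symmetric] Mb_def[symmetric]
    using fit_new fit_old M_step A_step penalty by linarith
qed

end
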